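(* Let $K$ be any maximal connected set of marked vertices in the subgraph of $\Gamma_X$ induced on its bulk vertices. Then $$\sum_{t=1}^{T-1}|R_{2t+1}|_K+\sum_{t=1}^{T}|C_{2t}|_K\;\le\;\sum_{t=1}^{T-1}|P_{2t+1}|_K+\sum_{t=1}^{T}|B_{2t}|_K.$$
   Context: $Q=(H^X,H^Z)$ is a CSS code: full-rank $H^X\in\mathbb F_2^{m_x\times n}$, $H^Z\in\mathbb F_2^{m_z\times n}$ with $H^X(H^Z)^T=0$; write $i\sim c$ if qubit $i$ is in the support of check $c$. $Q$ is $\ell$-LDPC (rows of weight $\le\ell$, each qubit in $\le\ell$ checks). ATG: fix $T\ge1$; graph with code vertices $q_{i,t}$ ($i\in[n]$, $t\in[2T+1]$), Z-check vertices $z_{c,t}$ ($c\in[m_z]$, $t$ odd), X-check vertices $x_{c,t}$ ($c\in[m_x]$, $t$ even); edges $q_{i,t}q_{i,t+1}$, $q_{i,t}z_{c,t}$ ($t$ odd, $H^Z_{c,i}=1$), $q_{i,t}x_{c,t}$ ($t$ even, $H^X_{c,i}=1$). Boundary $\partial=\{q_{i,1},q_{i,2T+1}\}$, bulk $\mathcal B=$ all other vertices. Decoding setup. A Z-type bulk error is $\eta\in\{0,1\}^{\mathcal B}$ with components $P_t\in\{0,1\}^n$ (code vertices of layer $t$, $2\le t\le 2T$) and $B_t$ (check vertices of layer $t$; $B_t\in\{0,1\}^{m_z}$ for odd $t$, $\in\{0,1\}^{m_x}$ for even $t$). The meta-check vectors are the indicator vectors $\alpha\in\{0,1\}^{\mathcal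 B}$ of the sets $\{z_{c,t-1},z_{c,t+1}\}\cup\{q_{i,t}:i\sim c\}$ ($t$ even, $c\in[m_z]$) and $\{x_{c,t-1},x_{c,t+1}\}\cup\{q_{i,t}:i\sim c\}$ ($t$ odd, $3\le t\le 2T-1$, $c\in[m_x]$). The decoder outputs a minimum-Hamming-weight $\beta\in\{0,1\}^{\mathcal B}$ with $\alpha\cdot\beta=\alpha\cdot\eta\pmod 2$ for all meta-check vectors $\alpha$; $R_t,C_t$ denote the components of $\beta$ analogous to $P_t,B_t$. Residual: $G_1\in\{0,1\}^n$ is a minimum-weight vector with $H^XG_1=B_2\oplus C_2$ and $G_{2T+1}$ a minimum-weight vector with $H^XG_{2T+1}=B_{2T}\oplus C_{2T}$. X syndrome adjacency graph $\Gamma_X$: vertex set $\{q_{i,t}: i\in[n], t\text{ odd in }[2T+1]\}\cup\{x_{c,t}:c\in[m_x], t\text{ even in }[2T]\}$; two distinct vertices are adjacent iff both lie in one of the sets $\{x_{c,t-1},x_{c,t+1}\}\cup\{q_{i,t}:i\sim c\}$ (odd $3\le t\le2T-1$), $\{x_{c,2}\}\cup\{q_{i,1}:i\sim c\}$, or $\{x_{c,2T}\}\cup\{q_{i,2T+1}:i\sim c\}$ ($c\in[m_x]$). Its boundary vertices are $q_{i,1},q_{i,2T+1}$; all others are its bulk vertices. Marking: bulk $q_{i,t}$ is marked iff $(P_t)_i\ne(R_t)_i$; $x_{c,t}$ is marked iff $(B_t)_c\ne(C_t)_c$; $q_{i,1}$ (resp. $q_{i,2T+1}$) is marked iff $(G_1)_i=1$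 (resp. $(G_{2T+1})_i=1$). For a vector $U$ indexed by the vertices of one layer and a vertex set $K$, $|U|_K$ denotes the number of positions $j$ with $U_j=1$ whose corresponding vertex lies in $K$. *)

theory Defs
  imports Main
begin

text \<open>Conventions: [n] = {0..<n} for qubit and check indices; layers t range over
  {1..2T+1}. Matrices over F_2 are Boolean-valued functions (row, column).
  Vectors in {0,1}^V are represented by their supports (subsets of V).\<close>

datatype vtx = Q nat nat | ZC nat nat | XC nat nat

definition f2_full_row_rank :: "(nat \<Rightarrow> nat \<Rightarrow> bool) \<Rightarrow> nat \<Rightarrow> nat \<Rightarrow> bool" where
  "f2_full_row_rank H m n \<longleftrightarrow>
     (\<forall>S. S \<subseteq> {..<m} \<and> S \<noteq> {} \<longrightarrow> (\<exists>i<n. odd (card {c \<in> S. H c i})))"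

definition css_code :: "(nat \<Rightarrow> nat \<Rightarrow> bool) \<Rightarrow> (nat \<Rightarrow> nat \<Rightarrow> bool) \<Rightarrow> nat \<Rightarrow> nat \<Rightarrow> nat \<Rightarrow> bool" where
  "css_code HX HZ n mx mz \<longleftrightarrow>
     f2_full_row_rank HX mx n \<and> f2_full_row_rank HZ mz n \<and>
     (\<forall>c<mx. \<forall>d<mz. even (card {i. i < n \<and> HX c i \<and> HZ d i}))"

definition ldpc :: "nat \<Rightarrow> (nat \<Rightarrow> nat \<Rightarrow> bool) \<Rightarrow> nat \<Rightarrow> nat \<Rightarrow> bool" where
  "ldpc l H m n \<longleftrightarrow>
     (\<forall>c<m. card {i. i < n \<and> H c i} \<le> l) \<and> (\<forall>i<n. card {c. c < m \<and> H c i} \<le> l)"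

definition atg_vertices :: "nat \<Rightarrow> nat \<Rightarrow> nat \<Rightarrow> nat \<Rightarrow> vtx set" where
  "atg_vertices n mx mz T =
     {Q i t | i t. i < n \<and> 1 \<le> t \<and> t \<le> 2*T+1}
   \<union> {ZC c t | c t. c < mz \<and> odd t \<and> 1 \<le> t \<and> t \<le> 2*T+1}
   \<union> {XC c t | c t. c < mx \<and> even t \<and> 1 \<le> t \<and> t \<le> 2*T+1}"

definition atg_boundary :: "nat \<Rightarrow> nat \<Rightarrow> vtx set" where
  "atg_boundary n T = {Q i 1 | i. i < n} \<union> {Q i (2*T+1) | i. i < n}"

definition atg_bulk :: "nat \<Rightarrow> nat \<Rightarrow> nat \<Rightarrow> nat \<Rightarrow> vtx set" where
  "atg_bulk n mx mz T = atg_vertices n mx mz T - atg_boundary n T"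

definition meta_checks ::
  "(nat \<Rightarrow> nat \<Rightarrow> bool) \<Rightarrow> (nat \<Rightarrow> nat \<Rightarrow> bool) \<Rightarrow> nat \<Rightarrow> nat \<Rightarrow> nat \<Rightarrow> nat \<Rightarrow> vtx set set" where
  "meta_checks HX HZ n mx mz T =
     {{ZC c (t-1), ZC c (t+1)} \<union> {Q i t | i. i < n \<and> HZ c i} | c t.
        c < mz \<and> even t \<and> 2 \<le> t \<and> t \<le> 2*T}
   \<union> {{XC c (t-1), XC c (t+1)} \<union> {Q i t | i. i < n \<and> HX c i} | c t.
        c < mx \<and> odd t \<and> 3 \<le> t \<and> t \<le> 2*T-1}"

definition dot2 :: "vtx set \<Rightarrow> vtx set \<Rightarrow> bool" where
  "dot2 a b \<longleftrightarrow> odd (card (a \<inter> b))"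

definition decoder_output ::
  "(nat \<Rightarrow> nat \<Rightarrow> bool) \<Rightarrow> (nat \<Rightarrow> nat \<Rightarrow> bool) \<Rightarrow> nat \<Rightarrow> nat \<Rightarrow> nat \<Rightarrow> nat
   \<Rightarrow> vtx set \<Rightarrow> vtx set \<Rightarrow> bool" where
  "decoder_output HX HZ n mx mz T eta beta \<longleftrightarrow>
     (let B = atg_bulk n mx mz T; M = meta_checks HX HZ n mx mz T;
          ok = (\<lambda>b. b \<subseteq> B \<and> (\<forall>a\<in>M. dot2 a b = dot2 a eta))
      in ok beta \<and> (\<forall>b. ok b \<longrightarrow> card beta \<le> card b))"

definition gx_vertices :: "nat \<Rightarrow> nat \<Rightarrow> nat \<Rightarrow> vtx set" where
  "gx_vertices n mx T =
     {Q i t | i t. i < n \<and> odd t \<and> 1 \<le> t \<and> t \<le> 2*T+1}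
   \<union> {XC c t | c t. c < mx \<and> even t \<and> 1 \<le> t \<and> t \<le> 2*T}"

definition gx_hyperedges :: "(nat \<Rightarrow> nat \<Rightarrow> bool) \<Rightarrow> nat \<Rightarrow> nat \<Rightarrow> nat \<Rightarrow> vtx set set" where
  "gx_hyperedges HX n mx T =
     {{XC c (t-1), XC c (t+1)} \<union> {Q i t | i. i < n \<and> HX c i} | c t.
        c < mx \<and> odd t \<and> 3 \<le> t \<and> t \<le> 2*T-1}
   \<union> {{XC c 2} \<union> {Q i 1 | i. i < n \<and> HX c i} | c. c < mx}
   \<union> {{XC c (2*T)} \<union> {Q i (2*T+1) | i. i < n \<and> HX c i} | c. c < mx}"

definition gx_adj :: "(nat \<Rightarrow> nat \<Rightarrow> bool) \<Rightarrow> nat \<Rightarrow> nat \<Rightarrow> nat \<Rightarrow> vtx \<Rightarrow> vtx \<Rightarrow> bool" where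
  "gx_adj HX n mx T u v \<longleftrightarrow>
     u \<in> gx_vertices n mx T \<and> v \<in> gx_vertices n mx T \<and> u \<noteq> v \<and>
     (\<exists>e\<in>gx_hyperedges HX n mx T. u \<in> e \<and> v \<in> e)"

definition gx_bulk :: "nat \<Rightarrow> nat \<Rightarrow> nat \<Rightarrow> vtx set" where
  "gx_bulk n mx T = gx_vertices n mx T - atg_boundary n T"

text \<open>Marked bulk vertices of Gamma_X: bulk q_{i,t} marked iff (P_t)_i \<noteq> (R_t)_i,
  x_{c,t} marked iff (B_t)_c \<noteq> (C_t)_c.\<close>
definition marked_bulk :: "nat \<Rightarrow> nat \<Rightarrow> nat \<Rightarrow> vtx set \<Rightarrow> vtx set \<Rightarrow> vtx set" where
  "marked_bulk n mx T eta beta = {v \<in> gx_bulk n mx T. (v \<in> eta) \<noteq> (v \<in> beta)}"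

definition connected_set :: "(vtx \<Rightarrow> vtx \<Rightarrow> bool) \<Rightarrow> vtx set \<Rightarrow> bool" where
  "connected_set E S \<longleftrightarrow> S \<noteq> {} \<and>
     (\<forall>u\<in>S. \<forall>v\<in>S. (\<lambda>a b. a \<in> S \<and> b \<in> S \<and> E a b)\<^sup>*\<^sup>* u v)"

definition maximal_marked_cluster ::
  "(nat \<Rightarrow> nat \<Rightarrow> bool) \<Rightarrow> nat \<Rightarrow> nat \<Rightarrow> nat \<Rightarrow> vtx set \<Rightarrow> vtx set \<Rightarrow> vtx set \<Rightarrow> bool" where
  "maximal_marked_cluster HX n mx T eta beta K \<longleftrightarrow>
     (let E = (\<lambda>u v. u \<in> gx_bulk n mx T \<and> v \<in> gx_bulk n mx T \<and> gx_adj HX n mx T u v);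
          M = marked_bulk n mx T eta beta
      in K \<subseteq> M \<and> connected_set E K \<and>
         (\<forall>K'. K \<subseteq> K' \<and> K' \<subseteq> M \<and> connected_set E K' \<longrightarrow> K' = K))"

end

theory Submission
  imports Defs
begin

text \<open>Flipping the decoder output \<beta> on the cluster K gives another valid correction:
  Z-type meta-checks avoid the bulk of \<Gamma>_X altogether, and an X-type meta-check is a hyperedge of
  \<Gamma>_X, so by maximality all of its marked vertices lie in K as soon as one does; its
  intersection with K is then the symmetric difference of its intersections with \<eta> and \<beta>,
  which has even size because \<beta> reproduces the syndrome of \<eta>. Minimality of \<beta> therefore
  gives |\<beta> \<inter> K| \<le> |K - \<beta>| \<le> |\<eta> \<inter> K|, and the two sides of the claim are these cardinalities
  counted layer by layer.\<close>

lemma Q_in_gx_vertices [simp]: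
  "Q i t \<in> gx_vertices n mx T \<longleftrightarrow> i < n \<and> odd t \<and> 1 \<le> t \<and> t \<le> 2*T+1"
  by (auto simp: gx_vertices_def)

lemma XC_in_gx_vertices [simp]:
  "XC c t \<in> gx_vertices n mx T \<longleftrightarrow> c < mx \<and> even t \<and> 1 \<le> t \<and> t \<le> 2*T"
  by (auto simp: gx_vertices_def)

lemma ZC_notin_gx_vertices [simp]: "ZC c t \<notin> gx_vertices n mx T"
  by (auto simp: gx_vertices_def)

lemma Q_in_atg_boundary [simp]:
  "Q i t \<in> atg_boundary n T \<longleftrightarrow> i < n \<and> (t = 1 \<or> t = 2*T+1)"
  by (auto simp: atg_boundary_def)

lemma XC_notin_atg_boundary [simp]: "XC c t \<notin> atg_boundary n T"
  by (auto simp: atg_boundary_def)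

lemma ZC_notin_atg_boundary [simp]: "ZC c t \<notin> atg_boundary n T"
  by (auto simp: atg_boundary_def)

lemma Q_in_gx_bulk [simp]:
  "Q i t \<in> gx_bulk n mx T \<longleftrightarrow> i < n \<and> odd t \<and> 3 \<le> t \<and> t \<le> 2*T-1"
  unfolding gx_bulk_def by auto presburger+

lemma XC_in_gx_bulk [simp]:
  "XC c t \<in> gx_bulk n mx T \<longleftrightarrow> c < mx \<and> even t \<and> 1 \<le> t \<and> t \<le> 2*T"
  unfolding gx_bulk_def by auto

lemma ZC_notin_gx_bulk [simp]: "ZC c t \<notin> gx_bulk n mx T"
  unfolding gx_bulk_def by auto

lemma finite_atg_vertices: "finite (atg_vertices n mx mz T)"
proof (rule finite_subset)
  show "atg_vertices n mx mz T \<subseteq> (\<lambda>(i,t). Q i t) ` ({..<n} \<times> {..2*T+1})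
      \<union> (\<lambda>(c,t). ZC c t) ` ({..<mz} \<times> {..2*T+1}) \<union> (\<lambda>(c,t). XC c t) ` ({..<mx} \<times> {..2*T+1})"
    unfolding atg_vertices_def by force
qed auto

lemma finite_atg_bulk: "finite (atg_bulk n mx mz T)"
  unfolding atg_bulk_def using finite_atg_vertices by auto

lemma gx_bulk_subset_atg_bulk: "gx_bulk n mx T \<subseteq> atg_bulk n mx mz T"
proof
  fix v assume "v \<in> gx_bulk n mx T"
  then show "v \<in> atg_bulk n mx mz T"
    by (cases v) (auto simp: atg_bulk_def atg_vertices_def)
qed

lemma card_gx_bulk_subset_by_layers:
  assumes "S \<subseteq> gx_bulk n mx T" and "finite S"
  shows "card S = (\<Sum>t=1..T-1. card {i. i < n \<and> Q i (2*t+1) \<in> S})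
       + (\<Sum>t=1..T. card {c. c < mx \<and> XC c (2*t) \<in> S})"
proof -
  define SQ where "SQ t = (\<lambda>i. Q i (2*t+1)) ` {i. i < n \<and> Q i (2*t+1) \<in> S}" for t
  define SX where "SX t = (\<lambda>c. XC c (2*t)) ` {c. c < mx \<and> XC c (2*t) \<in> S}" for t
  have card_SQ: "card (SQ t) = card {i. i < n \<and> Q i (2*t+1) \<in> S}" for t
    unfolding SQ_def by (rule card_image) (auto simp: inj_on_def)
  have card_SX: "card (SX t) = card {c. c < mx \<and> XC c (2*t) \<in> S}" for t
    unfolding SX_def by (rule card_image) (auto simp: inj_on_def)
  have "S \<subseteq> (\<Union>t\<in>{1..T-1}. SQ t) \<union> (\<Union>t\<in>{1..T}. SX t)"
  proof
    fix v assume v: "v \<in> S"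
    with assms(1) have "v \<in> gx_bulk n mx T" by auto
    then show "v \<in> (\<Union>t\<in>{1..T-1}. SQ t) \<union> (\<Union>t\<in>{1..T}. SX t)"
    proof (cases v)
      case (Q i t)
      moreover obtain s where "t = 2*s+1"
        using \<open>v \<in> gx_bulk n mx T\<close> Q by (auto elim: oddE)
      ultimately show ?thesis
        using v \<open>v \<in> gx_bulk n mx T\<close> unfolding SQ_def by auto
    next
      case (XC c t)
      moreover obtain s where "t = 2*s"
        using \<open>v \<in> gx_bulk n mx T\<close> XC by (auto elim: evenE)
      ultimately show ?thesis
        using v \<open>v \<in> gx_bulk n mx T\<close> unfolding SX_def by auto
    qed simp
  qed
  then have S_eq: "S = (\<Union>t\<in>{1..T-1}. SQ t) \<union> (\<Union>t\<in>{1..T}. SX t)"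
    unfolding SQ_def SX_def by auto
  have "card S = card (\<Union>t\<in>{1..T-1}. SQ t) + card (\<Union>t\<in>{1..T}. SX t)"
    by (subst S_eq, rule card_Un_disjoint) (auto simp: SQ_def SX_def)
  also have "\<dots> = (\<Sum>t=1..T-1. card (SQ t)) + (\<Sum>t=1..T. card (SX t))"
    by (subst (1 2) card_UN_disjoint) (auto simp: SQ_def SX_def)
  finally show ?thesis by (simp add: card_SQ card_SX)
qed

lemma odd_card_sym_diff_iff:
  assumes "finite A" "finite B"
  shows "odd (card ((A - B) \<union> (B - A))) \<longleftrightarrow> odd (card A + card B)"
proof -
  have "card ((A - B) \<union> (B - A)) = card (A - B) + card (B - A)"
    by (rule card_Un_disjoint) (use assms in auto)
  moreover have "card (A - B) = card A - card (A \<inter> B)" "card (B - A) = card B - card (A \<inter> B)"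
    using assms by (simp_all add: card_Diff_subset_Int Int_commute)
  moreover have "card (A \<inter> B) \<le> card A" "card (A \<inter> B) \<le> card B"
    using assms by (auto intro: card_mono)
  ultimately show ?thesis by auto
qed

lemma dot2_sym_diff_even:
  assumes "finite b" "finite K" "even (card (a \<inter> K))"
  shows "dot2 a ((b - K) \<union> (K - b)) = dot2 a b"
proof -
  have "a \<inter> ((b - K) \<union> (K - b)) = (a \<inter> b - a \<inter> K) \<union> (a \<inter> K - a \<inter> b)" by auto
  then show ?thesis
    using odd_card_sym_diff_iff[of "a \<inter> b" "a \<inter> K"] assms by (simp add: dot2_def)
qed

lemma card_Int_le_if_sym_diff_not_smaller:
  assumes "finite b" "finite K" and K: "K \<subseteq> (e - b) \<union> (b - e)"
    and "card b \<le> card ((b - K) \<union> (K - b))"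
  shows "card (b \<inter> K) \<le> card (e \<inter> K)"
proof -
  have "card b = card (b \<inter> K) + card (b - K)"
    using assms(1) by (rule card_Int_Diff)
  moreover have "card ((b - K) \<union> (K - b)) = card (b - K) + card (K - b)"
    by (rule card_Un_disjoint) (use assms(1,2) in auto)
  moreover have "card (K - b) \<le> card (e \<inter> K)"
    using K assms(2) by (intro card_mono) auto
  ultimately show ?thesis using assms(4) by linarith
qed

lemma maximal_connected_set_absorbs_neighbours:
  assumes con: "connected_set E K" and "K \<subseteq> M"
    and max: "\<forall>K'. K \<subseteq> K' \<and> K' \<subseteq> M \<and> connected_set E K' \<longrightarrow> K' = K"
    and "k \<in> K" and "X \<subseteq> M"
    and adj: "\<forall>x\<in>X. x \<noteq> k \<longrightarrow> E x k \<and> E k x"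
  shows "X \<subseteq> K"
proof -
  let ?K' = "K \<union> X"
  let ?R' = "\<lambda>u v. u \<in> ?K' \<and> v \<in> ?K' \<and> E u v"
  have in_K: "?R'\<^sup>*\<^sup>* u v" if "u \<in> K" "v \<in> K" for u v
  proof -
    have "(\<lambda>u v. u \<in> K \<and> v \<in> K \<and> E u v)\<^sup>*\<^sup>* u v"
      using con that unfolding connected_set_def by blast
    then show ?thesis by (rule rtranclp_mono[THEN predicate2D, rotated]) auto
  qed
  have to_k: "?R'\<^sup>*\<^sup>* u k" and from_k: "?R'\<^sup>*\<^sup>* k u" if "u \<in> ?K'" for u
  proof -
    have "?R'\<^sup>*\<^sup>* u k \<and> ?R'\<^sup>*\<^sup>* k u"
    proof (cases "u \<in> K \<or> u = k")
      case True
      then show ?thesis using in_K \<open>k \<in> K\<close> by auto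
    next
      case False
      then have "?R' u k \<and> ?R' k u" using that adj \<open>k \<in> K\<close> by auto
      then show ?thesis by blast
    qed
    then show "?R'\<^sup>*\<^sup>* u k" "?R'\<^sup>*\<^sup>* k u" by auto
  qed
  have "connected_set E ?K'"
    unfolding connected_set_def using \<open>k \<in> K\<close> to_k from_k by (blast intro: rtranclp_trans)
  then have "?K' = K" using max \<open>K \<subseteq> M\<close> \<open>X \<subseteq> M\<close> by auto
  then show ?thesis by auto
qed

lemma marked_bulk_subset_gx_bulk: "marked_bulk n mx T eta beta \<subseteq> gx_bulk n mx T"
  by (auto simp: marked_bulk_def)

lemma maximal_marked_cluster_subset:
  "maximal_marked_cluster HX n mx T eta beta K \<Longrightarrow> K \<subseteq> marked_bulk n mx T eta beta"
  unfolding maximal_marked_cluster_def Let_def by blast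

lemma meta_check_cases:
  assumes "a \<in> meta_checks HX HZ n mx mz T"
  shows "a \<inter> gx_bulk n mx T = {} \<or> (a \<subseteq> gx_bulk n mx T \<and> a \<in> gx_hyperedges HX n mx T)"
  using assms unfolding meta_checks_def gx_hyperedges_def by auto

lemma cluster_meets_hyperedge_evenly:
  assumes cluster: "maximal_marked_cluster HX n mx T eta beta K"
    and "finite eta" "finite beta"
    and a: "a \<subseteq> gx_bulk n mx T" "a \<in> gx_hyperedges HX n mx T"
    and "dot2 a beta = dot2 a eta"
  shows "even (card (a \<inter> K))"
proof (cases "a \<inter> K = {}")
  case False
  then obtain k where k: "k \<in> a" "k \<in> K" by auto
  let ?M = "marked_bulk n mx T eta beta"
  let ?E = "\<lambda>u v. u \<in> gx_bulk n mx T \<and> v \<in> gx_bulk n mx T \<and> gx_adj HX n mx T u v"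
  have "K \<subseteq> ?M" and con: "connected_set ?E K"
    and max: "\<forall>K'. K \<subseteq> K' \<and> K' \<subseteq> ?M \<and> connected_set ?E K' \<longrightarrow> K' = K"
    using cluster unfolding maximal_marked_cluster_def Let_def by blast+
  have adj: "\<forall>x\<in>a \<inter> ?M. x \<noteq> k \<longrightarrow> ?E x k \<and> ?E k x"
  proof (intro ballI impI)
    fix x assume "x \<in> a \<inter> ?M" "x \<noteq> k"
    then have "x \<in> gx_bulk n mx T" "k \<in> gx_bulk n mx T" "x \<in> a" using a(1) k(1) by auto
    moreover from this have "x \<in> gx_vertices n mx T" "k \<in> gx_vertices n mx T"
      unfolding gx_bulk_def by auto
    moreover have "gx_adj HX n mx T x k" "gx_adj HX n mx T k x"
      unfolding gx_adj_def
      using calculation a(2) k(1) \<open>x \<noteq> k\<close> by (meson bexI)+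
    ultimately show "?E x k \<and> ?E k x" by simp
  qed
  have "a \<inter> ?M \<subseteq> K"
    by (rule maximal_connected_set_absorbs_neighbours[OF con \<open>K \<subseteq> ?M\<close> max \<open>k \<in> K\<close>
          Int_lower2 adj])
  with \<open>K \<subseteq> ?M\<close> have "a \<inter> K = (a \<inter> eta - a \<inter> beta) \<union> (a \<inter> beta - a \<inter> eta)"
    using a(1) unfolding marked_bulk_def by auto
  then show ?thesis
    using odd_card_sym_diff_iff[of "a \<inter> eta" "a \<inter> beta"] assms(2,3,6)
    by (simp add: dot2_def)
qed simp

lemma decoder_output_card_Int_cluster_le:
  assumes dec: "decoder_output HX HZ n mx mz T eta beta"
    and cluster: "maximal_marked_cluster HX n mx T eta beta K"
    and "eta \<subseteq> atg_bulk n mx mz T"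
  shows "card (beta \<inter> K) \<le> card (eta \<inter> K)"
proof -
  let ?B = "atg_bulk n mx mz T" and ?checks = "meta_checks HX HZ n mx mz T"
  let ?flip = "(beta - K) \<union> (K - beta)"
  have "beta \<subseteq> ?B" and beta_checks: "\<forall>a\<in>?checks. dot2 a beta = dot2 a eta"
    and min: "\<And>b. b \<subseteq> ?B \<Longrightarrow> \<forall>a\<in>?checks. dot2 a b = dot2 a eta \<Longrightarrow> card beta \<le> card b"
    using dec unfolding decoder_output_def Let_def by auto
  have K_marked: "K \<subseteq> marked_bulk n mx T eta beta"
    using cluster by (rule maximal_marked_cluster_subset)
  then have "K \<subseteq> gx_bulk n mx T" using marked_bulk_subset_gx_bulk by blast
  then have "K \<subseteq> ?B" using gx_bulk_subset_atg_bulk by blast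
  have fin: "finite beta" "finite eta" "finite K"
    using \<open>beta \<subseteq> ?B\<close> \<open>eta \<subseteq> ?B\<close> \<open>K \<subseteq> ?B\<close> finite_atg_bulk by (auto intro: finite_subset)
  have "dot2 a ?flip = dot2 a eta" if "a \<in> ?checks" for a
  proof -
    have "even (card (a \<inter> K))"
      using meta_check_cases[OF that]
    proof
      assume "a \<inter> gx_bulk n mx T = {}"
      with \<open>K \<subseteq> gx_bulk n mx T\<close> have "a \<inter> K = {}" by blast
      then show ?thesis by simp
    next
      assume "a \<subseteq> gx_bulk n mx T \<and> a \<in> gx_hyperedges HX n mx T"
      with beta_checks that show ?thesis
        by (intro cluster_meets_hyperedge_evenly[OF cluster fin(2,1)]) auto
    qed
    then have "dot2 a ?flip = dot2 a beta" by (intro dot2_sym_diff_even fin)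
    with beta_checks that show ?thesis by simp
  qed
  moreover have "?flip \<subseteq> ?B" using \<open>beta \<subseteq> ?B\<close> \<open>K \<subseteq> ?B\<close> by blast
  ultimately have "card beta \<le> card ?flip" by (intro min) auto
  moreover have "K \<subseteq> (eta - beta) \<union> (beta - eta)"
    using K_marked unfolding marked_bulk_def by blast
  ultimately show ?thesis by (intro card_Int_le_if_sym_diff_not_smaller fin)
qed

theorem lemma5p1:
  fixes HX HZ :: "nat \<Rightarrow> nat \<Rightarrow> bool"
    and n mx mz l T :: nat
    and eta beta K :: "vtx set"
  assumes "css_code HX HZ n mx mz"
    and "ldpc l HX mx n" and "ldpc l HZ mz n"
    and "T \<ge> 1"
    and "eta \<subseteq> atg_bulk n mx mz T"
    and "decoder_output HX HZ n mx mz T eta beta"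
    and "maximal_marked_cluster HX n mx T eta beta K"
  shows "(\<Sum>t=1..T-1. card {i. i < n \<and> Q i (2*t+1) \<in> beta \<and> Q i (2*t+1) \<in> K})
       + (\<Sum>t=1..T. card {c. c < mx \<and> XC c (2*t) \<in> beta \<and> XC c (2*t) \<in> K})
       \<le> (\<Sum>t=1..T-1. card {i. i < n \<and> Q i (2*t+1) \<in> eta \<and> Q i (2*t+1) \<in> K})
       + (\<Sum>t=1..T. card {c. c < mx \<and> XC c (2*t) \<in> eta \<and> XC c (2*t) \<in> K})"
proof -
  have "K \<subseteq> gx_bulk n mx T"
    using maximal_marked_cluster_subset[OF assms(7)] marked_bulk_subset_gx_bulk by blast
  moreover from this have "finite K"
    using gx_bulk_subset_atg_bulk[of n mx T mz] finite_atg_bulk by (meson finite_subset subset_trans)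
  ultimately have by_layers: "card (S \<inter> K) =
         (\<Sum>t=1..T-1. card {i. i < n \<and> Q i (2*t+1) \<in> S \<and> Q i (2*t+1) \<in> K})
       + (\<Sum>t=1..T. card {c. c < mx \<and> XC c (2*t) \<in> S \<and> XC c (2*t) \<in> K})" for S
    using card_gx_bulk_subset_by_layers[of "S \<inter> K" n mx T] by auto
  show ?thesis
    using decoder_output_card_Int_cluster_le[OF assms(6,7,5)]
    unfolding by_layers[of beta, symmetric] by_layers[of eta, symmetric] .
qed

end
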